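(* Let $r:\mathbb{R}\to[0,1]$, $0<\phi\le1$, $\eta_\lambda>0$, $\alpha\in(0,1)$, and let $(\lambda^*,c^* )$ be a fixed point of $F(\lambda,c)=\big(\phi\lambda-\eta_\lambda(r(\lambda)-c),\ (1-\alpha)c+\alpha r(\lambda)\big)$ (so $r(\lambda^* )=c^*$), with $r$ differentiable at $\lambda^*$ and $s=r'(\lambda^* )$. Consider the stochastic recursion $\lambda_{t+1}=\phi\lambda_t-\eta_\lambda(r_t-c_t)$, $c_{t+1}=(1-\alpha)c_t+\alpha r_t$, where the empirical flip rate is $r_t=r(\lambda_t)+\xi_t$ with $\mathbb{E}[\xi_t\mid\lambda_t]=0$ and $|\xi_t|\le\delta$ almost surely for some $\delta>0$. If the Jacobian $J=\begin{pmatrix}\phi-\eta_\lambda s & \eta_\lambda\\ \alpha s & 1-\alpha\end{pmatrix}$ has spectral radius $\rho(J)<1$, then the trajectory $(\lambda_t,c_t)$ is almost surely bounded, i.e. $\sup_{t\ge0}\|(\lambda_t,c_t)\|<\infty$ almost surely.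
   Context: Interpretation: within a mean-field approximation with RBM parameters frozen at $\theta^*$, $r(\lambda)=r(\theta^*,\lambda)$ is the mean Gibbs-sampler flip rate at log-temperature $\lambda$ (temperature $e^\lambda$), and $c_t$ is an exponentially smoothed reference flip rate. *)

theory Defs
  imports "HOL-Probability.Probability" "Jordan_Normal_Form.Spectral_Radius"
begin

text \<open>The Jacobian of F(lambda,c) at the fixed point, as a complex 2x2 matrix
  (so that the library spectral radius applies).\<close>
definition jacobian_J :: "real \<Rightarrow> real \<Rightarrow> real \<Rightarrow> real \<Rightarrow> complex mat" where
  "jacobian_J phi eta alpha s =
     mat_of_rows_list 2
       [[complex_of_real (phi - eta * s), complex_of_real eta],
        [complex_of_real (alpha * s), complex_of_real (1 - alpha)]]"

definition F_map :: "(real \<Rightarrow> real) \<Rightarrow> real \<Rightarrow> real \<Rightarrow> real \<Rightarrow> real \<times> real \<Rightarrow> real \<times> real" where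
  "F_map r phi eta alpha = (\<lambda>(l, c). (phi * l - eta * (r l - c), (1 - alpha) * c + alpha * r l))"

end

theory Submission
  imports Defs
begin

text \<open>Both recursions are driven by the input \<open>r(\<lambda>\<^sub>t) + \<xi>\<^sub>t\<close>, which is bounded by
  \<open>1 + \<delta>\<close>. The reference rate \<open>c\<^sub>t\<close> is a running convex combination of inputs, hence
  bounded, and if \<open>\<phi> < 1\<close> then \<open>\<lambda>\<^sub>t\<close> contracts by the factor \<open>\<phi>\<close> up to a bounded
  forcing term. The remaining case \<open>\<phi> = 1\<close> is excluded by the spectral hypothesis: then \<open>(1, s)\<close> is an eigenvector of \<open>J\<close> for the eigenvalue 1.
  The bound thus holds on every path where the noise stays within \<open>\<delta>\<close>; the zero-mean
  condition, the fixed point and the derivative enter only through \<open>\<rho>(J) < 1\<close>.\<close>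

lemma le_max_of_contraction_step:
  fixes u :: "nat \<Rightarrow> real"
  assumes q: "0 \<le> q" "q < 1"
    and step: "\<And>t. u (Suc t) \<le> q * u t + K"
  shows "u t \<le> max (u 0) (K / (1 - q))"
proof (induction t)
  case 0
  show ?case by simp
next
  case (Suc t)
  let ?m = "max (u 0) (K / (1 - q))"
  have "K = (1 - q) * (K / (1 - q))"
    using q by simp
  also have "\<dots> \<le> (1 - q) * ?m"
    using q by (intro mult_left_mono) auto
  finally have "K \<le> (1 - q) * ?m" .
  then show ?case
    using step[of t] mult_left_mono[OF Suc q(1)] by (simp add: algebra_simps)
qed

lemma trajectory_bounded_of_bounded_input:
  fixes l c u :: "nat \<Rightarrow> real"
  assumes "0 \<le> phi" "phi < 1" "0 \<le> eta" "0 < alpha" "alpha \<le> 1"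
    and u: "\<And>t. \<bar>u t\<bar> \<le> R"
    and l_step: "\<And>t. l (Suc t) = phi * l t - eta * (u t - c t)"
    and c_step: "\<And>t. c (Suc t) = (1 - alpha) * c t + alpha * u t"
  shows "\<exists>B. \<forall>t. norm (l t, c t) \<le> B"
proof -
  have c_contracts: "\<bar>c (Suc t)\<bar> \<le> (1 - alpha) * \<bar>c t\<bar> + alpha * R" for t
  proof -
    have "\<bar>c (Suc t)\<bar> \<le> (1 - alpha) * \<bar>c t\<bar> + alpha * \<bar>u t\<bar>"
      using assms(4,5) by (simp add: c_step abs_mult abs_triangle_ineq[THEN order_trans])
    also have "\<dots> \<le> (1 - alpha) * \<bar>c t\<bar> + alpha * R"
      using u[of t] assms(4) by (simp add: mult_left_mono)
    finally show ?thesis .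
  qed
  define C where "C = max \<bar>c 0\<bar> R"
  have c_le: "\<bar>c t\<bar> \<le> C" for t
    using le_max_of_contraction_step[where u = "\<lambda>t. \<bar>c t\<bar>", OF _ _ c_contracts] assms(4,5)
    by (simp add: C_def)
  have l_contracts: "\<bar>l (Suc t)\<bar> \<le> phi * \<bar>l t\<bar> + eta * (R + C)" for t
  proof -
    have "\<bar>l (Suc t)\<bar> \<le> phi * \<bar>l t\<bar> + eta * \<bar>u t - c t\<bar>"
      using assms(1,3) by (simp add: l_step abs_mult abs_triangle_ineq4[THEN order_trans])
    also have "\<dots> \<le> phi * \<bar>l t\<bar> + eta * (R + C)"
      using u[of t] c_le[of t] assms(3) by (intro add_left_mono mult_left_mono) linarith+
    finally show ?thesis .
  qed
  define L where "L = max \<bar>l 0\<bar> (eta * (R + C) / (1 - phi))"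
  have l_le: "\<bar>l t\<bar> \<le> L" for t
    using le_max_of_contraction_step[where u = "\<lambda>t. \<bar>l t\<bar>", OF assms(1,2) l_contracts]
    by (simp add: L_def)
  have "norm (l t, c t) \<le> L + C" for t
    using norm_Pair_le[of "l t" "c t"] l_le[of t] c_le[of t] by simp
  then show ?thesis by blast
qed

lemma norm_le_spectral_radius:
  assumes A: "A \<in> carrier_mat n n" and k: "eigenvalue A k"
  shows "cmod k \<le> spectral_radius A"
proof -
  obtain v :: "complex vec" where "v \<in> carrier_vec n" "v \<noteq> 0\<^sub>v n"
    using k A unfolding eigenvalue_def eigenvector_def by blast
  then have "n > 0" by (intro Nat.gr0I) (auto intro: eq_vecI)
  then show ?thesis
    using spectral_radius_mem_max(2)[OF A] k by (simp add: spectrum_def)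
qed

lemma eigenvalue_jacobian_J_phi_1: "eigenvalue (jacobian_J 1 eta alpha s) 1"
proof -
  let ?v = "vec_of_list [1, complex_of_real s]"
  have "jacobian_J 1 eta alpha s *\<^sub>v ?v = ?v"
    by (auto simp: jacobian_J_def mat_of_rows_list_def mult_mat_vec_def scalar_prod_def
        algebra_simps numeral_2_eq_2 less_Suc_eq simp flip: of_real_mult of_real_add
        intro!: eq_vecI)
  moreover have "?v \<noteq> 0\<^sub>v 2"
    by (auto dest: arg_cong[where f = "\<lambda>v :: complex vec. v $ 0"])
  ultimately show ?thesis
    unfolding eigenvalue_def eigenvector_def
    by (intro exI[of _ ?v]) (auto simp: jacobian_J_def mat_of_rows_list_def)
qed

lemma one_le_spectral_radius_jacobian_J_phi_1: "1 \<le> spectral_radius (jacobian_J 1 eta alpha s)"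
proof -
  have "jacobian_J 1 eta alpha s \<in> carrier_mat 2 2"
    unfolding jacobian_J_def mat_of_rows_list_def carrier_mat_def by simp
  from norm_le_spectral_radius[OF this eigenvalue_jacobian_J_phi_1]
  show ?thesis by simp
qed

theorem proposition1:
  fixes M :: "'w measure"
    and r :: "real \<Rightarrow> real"
    and phi eta alpha delta lstar cstar s :: real
    and lam c xi :: "nat \<Rightarrow> 'w \<Rightarrow> real"
  assumes "prob_space M"
    and r_range: "\<And>x. 0 \<le> r x \<and> r x \<le> 1"
    and "0 < phi" "phi \<le> 1" "0 < eta" "0 < alpha" "alpha < 1" "0 < delta"
    and fixed: "F_map r phi eta alpha (lstar, cstar) = (lstar, cstar)"
    and deriv: "(r has_real_derivative s) (at lstar)"
    and lam_meas: "\<And>t. lam t \<in> borel_measurable M"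
    and c_meas: "\<And>t. c t \<in> borel_measurable M"
    and xi_int: "\<And>t. integrable M (xi t)"
    and xi_cond: "\<And>t. AE w in M.
          real_cond_exp M (vimage_algebra (space M) (lam t) borel) (xi t) w = 0"
    and xi_bound: "\<And>t. AE w in M. \<bar>xi t w\<bar> \<le> delta"
    and rec_lam: "\<And>t w. w \<in> space M \<Longrightarrow>
          lam (Suc t) w = phi * lam t w - eta * ((r (lam t w) + xi t w) - c t w)"
    and rec_c: "\<And>t w. w \<in> space M \<Longrightarrow>
          c (Suc t) w = (1 - alpha) * c t w + alpha * (r (lam t w) + xi t w)"
    and spec: "spectral_radius (jacobian_J phi eta alpha s) < 1"
  shows "AE w in M. \<exists>B. \<forall>t. norm (lam t w, c t w) \<le> B"
proof -
  have "phi < 1"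
  proof (rule ccontr)
    assume "\<not> phi < 1"
    with \<open>phi \<le> 1\<close> have "1 \<le> spectral_radius (jacobian_J phi eta alpha s)"
      using one_le_spectral_radius_jacobian_J_phi_1 by simp
    with spec show False by simp
  qed
  have "AE w in M. \<forall>t. \<bar>xi t w\<bar> \<le> delta"
    using xi_bound by (simp add: AE_all_countable)
  moreover have "AE w in M. w \<in> space M"
    by simp
  ultimately show ?thesis
  proof eventually_elim
    case (elim w)
    have "\<bar>r (lam t w) + xi t w\<bar> \<le> 1 + delta" for t
      using r_range[of "lam t w"] elim(1)[rule_format, of t] by (auto simp: abs_le_iff)
    with elim(2) show ?case
      using assms(3,5,6,7) \<open>phi < 1\<close> rec_lam rec_c
      by (intro trajectory_bounded_of_bounded_input[where u = "\<lambda>t. r (lam t w) + xi t w"]) auto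
  qed
qed

end
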